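(* Let $\mathcal{A}\text{-Sch}$ be the category of $\mathcal{A}$-schemes over the algebraic system of rings, and let $\mathbf{LRCoh}$ be the category of locally ringed spaces whose underlying space is coherent, with morphisms the morphisms of locally ringed spaces whose underlying continuous map is quasi-compact. Then for every $\mathcal{A}$-scheme $(X,\mathcal{O}_X,\beta_X)$, the ringed space $(X,\mathcal{O}_X)$ is locally ringed, every morphism of $\mathcal{A}$-schemes is a morphism of locally ringed spaces, so $(X,\mathcal{O}_X,\beta_X)\mapsto(X,\mathcal{O}_X)$ defines a functor $\mathcal{A}\text{-Sch}\to\mathbf{LRCoh}$; moreover this functor is fully faithful.
   Context: All rings are commutative with $1$. A topological space is coherent if it is sober (every irreducible closed subset has a unique generic point), quasi-compact, quasi-separated (intersections of two quasi-compact opens are quasi-compact) and has a basis of quasi-compact opens; a continuous map of coherent spaces is quasi-compact if preimages of quasi-compact opens are quasi-compact. For a coherent space $U$, $C(U)_{\mathrm{cpt}}$ is the set of closed subsets of $U$ with quasi-compact complement. For a ring $R$, $\alpha_1(R)$ is the set of finitely generated ideals of $R$ modulo the equivalence relation generated by $I\cdot I\sim I$, and $\alpha_2(a)$ denotes the class of the principal ideal $(a)$. An $\mathcal{A}$-scheme is a triple $(X,\mathcal{O}_X,\beta_X)$ where $X$ is a coherent space, $\mathcal{O}_X$ is a sheaf of rings on $X$, and $\beta_X$ (the support morphism) is a family of maps $\beta_X:\alpha_1(\mathcal{O}_X(U))\to C(U)_{\mathrm{cpt}}$ for quasi-compact open $U$, compatible with restrictions, with $\beta_X(I+J)=\beta_X(I)\cap\beta_X(J)$,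 $\beta_X(IJ)=\beta_X(I)\cup\beta_X(J)$, $\beta_X(0)=U$, $\beta_X(\mathcal{O}_X(U))=\emptyset$; it must satisfy: whenever $V\subset U$ are quasi-compact open and $a\in\mathcal{O}_X(U)$ satisfies $\beta_X(\alpha_2(a))\subset U\setminus V$, then $a|_V$ is invertible in $\mathcal{O}_X(V)$ ("restrictions reflect localizations"). A morphism $f:X\to Y$ of $\mathcal{A}$-schemes is a pair $(|f|,f^{\#})$ where $|f|$ is a quasi-compact continuous map and $f^{\#}:\mathcal{O}_Y\to|f|_*\mathcal{O}_X$ is a morphism of sheaves of rings with $\beta_X(f^{\#}(I))=|f|^{-1}(\beta_Y(I))$ for all finitely generated ideals $I$ of sections of $\mathcal{O}_Y$ over quasi-compact opens. *)

theory Defs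
  imports "HOL-Analysis.Abstract_Topology" "HOL-Algebra.Ideal_Product"
begin

definition irreducible_closed :: "'a topology \<Rightarrow> 'a set \<Rightarrow> bool" where
  "irreducible_closed X Z \<longleftrightarrow> closedin X Z \<and> Z \<noteq> {} \<and>
     (\<forall>A B. closedin X A \<and> closedin X B \<and> Z \<subseteq> A \<union> B \<longrightarrow> Z \<subseteq> A \<or> Z \<subseteq> B)"

definition sober_space :: "'a topology \<Rightarrow> bool" where
  "sober_space X \<longleftrightarrow> (\<forall>Z. irreducible_closed X Z \<longrightarrow>
      (\<exists>!x. x \<in> topspace X \<and> X closure_of {x} = Z))"

definition qc_open :: "'a topology \<Rightarrow> 'a set \<Rightarrow> bool" where
  "qc_open X U \<longleftrightarrow> openin X U \<and> compactin X U"

definition coherent_space :: "'a topology \<Rightarrow> bool" where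
  "coherent_space X \<longleftrightarrow> sober_space X \<and> compact_space X \<and>
     (\<forall>U V. qc_open X U \<and> qc_open X V \<longrightarrow> compactin X (U \<inter> V)) \<and>
     (\<forall>U x. openin X U \<and> x \<in> U \<longrightarrow> (\<exists>W. qc_open X W \<and> x \<in> W \<and> W \<subseteq> U))"

definition quasi_compact_map :: "'a topology \<Rightarrow> 'b topology \<Rightarrow> ('a \<Rightarrow> 'b) \<Rightarrow> bool" where
  "quasi_compact_map X Y f \<longleftrightarrow> continuous_map X Y f \<and>
     (\<forall>V. qc_open Y V \<longrightarrow> compactin X (f -` V \<inter> topspace X))"

definition C_cpt :: "'a topology \<Rightarrow> 'a set \<Rightarrow> 'a set set" where
  "C_cpt X U = {Z. closedin (subtopology X U) Z \<and> compactin X (U - Z)}"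

definition presheaf_of_crings ::
  "'a topology \<Rightarrow> ('a set \<Rightarrow> 'r ring) \<Rightarrow> ('a set \<Rightarrow> 'a set \<Rightarrow> 'r \<Rightarrow> 'r) \<Rightarrow> bool" where
  "presheaf_of_crings X S \<rho> \<longleftrightarrow>
     (\<forall>U. openin X U \<longrightarrow> cring (S U)) \<and>
     (\<forall>U V. openin X U \<and> openin X V \<and> V \<subseteq> U \<longrightarrow> \<rho> U V \<in> ring_hom (S U) (S V)) \<and>
     (\<forall>U. openin X U \<longrightarrow> (\<forall>s\<in>carrier (S U). \<rho> U U s = s)) \<and>
     (\<forall>U V W. openin X U \<and> openin X V \<and> openin X W \<and> W \<subseteq> V \<and> V \<subseteq> U \<longrightarrow>
        (\<forall>s\<in>carrier (S U). \<rho> V W (\<rho> U V s) = \<rho> U W s))"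

definition sheaf_of_crings ::
  "'a topology \<Rightarrow> ('a set \<Rightarrow> 'r ring) \<Rightarrow> ('a set \<Rightarrow> 'a set \<Rightarrow> 'r \<Rightarrow> 'r) \<Rightarrow> bool" where
  "sheaf_of_crings X S \<rho> \<longleftrightarrow> presheaf_of_crings X S \<rho> \<and>
     (\<forall>U \<U>. openin X U \<and> (\<forall>W\<in>\<U>. openin X W) \<and> \<Union>\<U> = U \<longrightarrow>
        (\<forall>s\<in>carrier (S U). \<forall>t\<in>carrier (S U). (\<forall>W\<in>\<U>. \<rho> U W s = \<rho> U W t) \<longrightarrow> s = t) \<and>
        (\<forall>\<sigma>. (\<forall>W\<in>\<U>. \<sigma> W \<in> carrier (S W)) \<and>
              (\<forall>W1\<in>\<U>. \<forall>W2\<in>\<U>. \<rho> W1 (W1 \<inter> W2) (\<sigma> W1) = \<rho> W2 (W1 \<inter> W2) (\<sigma> W2)) \<longrightarrow>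
              (\<exists>s\<in>carrier (S U). \<forall>W\<in>\<U>. \<rho> U W s = \<sigma> W)))"

definition ringed_space_morphism ::
  "'a topology \<Rightarrow> ('a set \<Rightarrow> 'r ring) \<Rightarrow> ('a set \<Rightarrow> 'a set \<Rightarrow> 'r \<Rightarrow> 'r) \<Rightarrow>
   'b topology \<Rightarrow> ('b set \<Rightarrow> 's ring) \<Rightarrow> ('b set \<Rightarrow> 'b set \<Rightarrow> 's \<Rightarrow> 's) \<Rightarrow>
   ('a \<Rightarrow> 'b) \<Rightarrow> ('b set \<Rightarrow> 's \<Rightarrow> 'r) \<Rightarrow> bool" where
  "ringed_space_morphism X OX \<rho>X Y OY \<rho>Y f \<phi> \<longleftrightarrow>
     continuous_map X Y f \<and>
     (\<forall>V. openin Y V \<longrightarrow> \<phi> V \<in> ring_hom (OY V) (OX (f -` V \<inter> topspace X))) \<and>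
     (\<forall>V W. openin Y V \<and> openin Y W \<and> W \<subseteq> V \<longrightarrow>
        (\<forall>t\<in>carrier (OY V). \<phi> W (\<rho>Y V W t) =
            \<rho>X (f -` V \<inter> topspace X) (f -` W \<inter> topspace X) (\<phi> V t)))"

definition germ_pairs :: "'a topology \<Rightarrow> ('a set \<Rightarrow> 'r ring) \<Rightarrow> 'a \<Rightarrow> ('a set \<times> 'r) set" where
  "germ_pairs X S x = {(U, s). openin X U \<and> x \<in> U \<and> s \<in> carrier (S U)}"

definition germ_rel ::
  "'a topology \<Rightarrow> ('a set \<Rightarrow> 'r ring) \<Rightarrow> ('a set \<Rightarrow> 'a set \<Rightarrow> 'r \<Rightarrow> 'r) \<Rightarrow> 'a \<Rightarrow> ('a set \<times> 'r) rel" where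
  "germ_rel X S \<rho> x = {((U, s), (V, t)). (U, s) \<in> germ_pairs X S x \<and> (V, t) \<in> germ_pairs X S x \<and>
      (\<exists>W. openin X W \<and> x \<in> W \<and> W \<subseteq> U \<inter> V \<and> \<rho> U W s = \<rho> V W t)}"

definition germ ::
  "'a topology \<Rightarrow> ('a set \<Rightarrow> 'r ring) \<Rightarrow> ('a set \<Rightarrow> 'a set \<Rightarrow> 'r \<Rightarrow> 'r) \<Rightarrow> 'a \<Rightarrow> 'a set \<Rightarrow> 'r \<Rightarrow> ('a set \<times> 'r) set" where
  "germ X S \<rho> x U s = germ_rel X S \<rho> x `` {(U, s)}"

definition stalk ::
  "'a topology \<Rightarrow> ('a set \<Rightarrow> 'r ring) \<Rightarrow> ('a set \<Rightarrow> 'a set \<Rightarrow> 'r \<Rightarrow> 'r) \<Rightarrow> 'a \<Rightarrow> ('a set \<times> 'r) set ring" where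
  "stalk X S \<rho> x =
    \<lparr> carrier = germ_pairs X S x // germ_rel X S \<rho> x,
      mult = (\<lambda>A B. case (SOME p. p \<in> A, SOME q. q \<in> B) of ((U, s), (V, t)) \<Rightarrow>
                germ X S \<rho> x (U \<inter> V) (\<rho> U (U \<inter> V) s \<otimes>\<^bsub>S (U \<inter> V)\<^esub> \<rho> V (U \<inter> V) t)),
      one = germ X S \<rho> x (topspace X) \<one>\<^bsub>S (topspace X)\<^esub>,
      zero = germ X S \<rho> x (topspace X) \<zero>\<^bsub>S (topspace X)\<^esub>,
      add = (\<lambda>A B. case (SOME p. p \<in> A, SOME q. q \<in> B) of ((U, s), (V, t)) \<Rightarrow>
                germ X S \<rho> x (U \<inter> V) (\<rho> U (U \<inter> V) s \<oplus>\<^bsub>S (U \<inter> V)\<^esub> \<rho> V (U \<inter> V) t)) \<rparr>"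

definition stalk_map ::
  "'a topology \<Rightarrow> ('a set \<Rightarrow> 'r ring) \<Rightarrow> ('a set \<Rightarrow> 'a set \<Rightarrow> 'r \<Rightarrow> 'r) \<Rightarrow>
   ('a \<Rightarrow> 'b) \<Rightarrow> ('b set \<Rightarrow> 's \<Rightarrow> 'r) \<Rightarrow> 'a \<Rightarrow> ('b set \<times> 's) set \<Rightarrow> ('a set \<times> 'r) set" where
  "stalk_map X OX \<rho>X f \<phi> x = (\<lambda>A. case SOME p. p \<in> A of (V, t) \<Rightarrow>
      germ X OX \<rho>X x (f -` V \<inter> topspace X) (\<phi> V t))"

definition local_ring :: "('r, 'm) ring_scheme \<Rightarrow> bool" where
  "local_ring R \<longleftrightarrow> cring R \<and> (\<exists>!M. maximalideal M R)"

definition max_ideal :: "('r, 'm) ring_scheme \<Rightarrow> 'r set" where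
  "max_ideal R = (THE M. maximalideal M R)"

definition local_ring_hom :: "('r, 'm) ring_scheme \<Rightarrow> ('s, 'n) ring_scheme \<Rightarrow> ('r \<Rightarrow> 's) \<Rightarrow> bool" where
  "local_ring_hom A B h \<longleftrightarrow> h \<in> ring_hom A B \<and> h ` max_ideal A \<subseteq> max_ideal B"

definition locally_ringed_space ::
  "'a topology \<Rightarrow> ('a set \<Rightarrow> 'r ring) \<Rightarrow> ('a set \<Rightarrow> 'a set \<Rightarrow> 'r \<Rightarrow> 'r) \<Rightarrow> bool" where
  "locally_ringed_space X S \<rho> \<longleftrightarrow> sheaf_of_crings X S \<rho> \<and>
     (\<forall>x\<in>topspace X. local_ring (stalk X S \<rho> x))"

definition LRCoh_object ::
  "'a topology \<Rightarrow> ('a set \<Rightarrow> 'r ring) \<Rightarrow> ('a set \<Rightarrow> 'a set \<Rightarrow> 'r \<Rightarrow> 'r) \<Rightarrow> bool" where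
  "LRCoh_object X S \<rho> \<longleftrightarrow> coherent_space X \<and> locally_ringed_space X S \<rho>"

definition LRCoh_morphism ::
  "'a topology \<Rightarrow> ('a set \<Rightarrow> 'r ring) \<Rightarrow> ('a set \<Rightarrow> 'a set \<Rightarrow> 'r \<Rightarrow> 'r) \<Rightarrow>
   'b topology \<Rightarrow> ('b set \<Rightarrow> 's ring) \<Rightarrow> ('b set \<Rightarrow> 'b set \<Rightarrow> 's \<Rightarrow> 's) \<Rightarrow>
   ('a \<Rightarrow> 'b) \<Rightarrow> ('b set \<Rightarrow> 's \<Rightarrow> 'r) \<Rightarrow> bool" where
  "LRCoh_morphism X OX \<rho>X Y OY \<rho>Y f \<phi> \<longleftrightarrow>
     quasi_compact_map X Y f \<and> ringed_space_morphism X OX \<rho>X Y OY \<rho>Y f \<phi> \<and>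
     (\<forall>x\<in>topspace X. local_ring_hom (stalk Y OY \<rho>Y (f x)) (stalk X OX \<rho>X x)
                                      (stalk_map X OX \<rho>X f \<phi> x))"

definition fg_ideal :: "('r, 'm) ring_scheme \<Rightarrow> 'r set \<Rightarrow> bool" where
  "fg_ideal R I \<longleftrightarrow> ideal I R \<and> (\<exists>G. finite G \<and> G \<subseteq> carrier R \<and> I = Idl\<^bsub>R\<^esub> G)"

text \<open>The equivalence relation on finitely generated ideals generated by \<open>I\<cdot>I \<sim> I\<close>;
  \<open>\<alpha>\<^sub>1(R)\<close> is the quotient of the f.g. ideals by it.\<close>
definition alpha1_rel :: "('r, 'm) ring_scheme \<Rightarrow> 'r set rel" where
  "alpha1_rel R = (let r = {(ideal_prod R I I, I) | I. fg_ideal R I} in (r \<union> r\<inverse>)\<^sup>*)"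

text \<open>Support morphism \<open>\<beta> U\<close>, given on representatives (finitely generated ideals of \<open>O U\<close>).\<close>
definition A_scheme ::
  "'a topology \<Rightarrow> ('a set \<Rightarrow> 'r ring) \<Rightarrow> ('a set \<Rightarrow> 'a set \<Rightarrow> 'r \<Rightarrow> 'r) \<Rightarrow> ('a set \<Rightarrow> 'r set \<Rightarrow> 'a set) \<Rightarrow> bool" where
  "A_scheme X S \<rho> \<beta> \<longleftrightarrow> coherent_space X \<and> sheaf_of_crings X S \<rho> \<and>
     (\<forall>U. qc_open X U \<longrightarrow>
        (\<forall>I. fg_ideal (S U) I \<longrightarrow> \<beta> U I \<in> C_cpt X U) \<and>
        (\<forall>I J. fg_ideal (S U) I \<and> fg_ideal (S U) J \<and> (I, J) \<in> alpha1_rel (S U) \<longrightarrow> \<beta> U I = \<beta> U J) \<and>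
        (\<forall>I J. fg_ideal (S U) I \<and> fg_ideal (S U) J \<longrightarrow>
            \<beta> U (set_add (S U) I J) = \<beta> U I \<inter> \<beta> U J \<and>
            \<beta> U (ideal_prod (S U) I J) = \<beta> U I \<union> \<beta> U J) \<and>
        \<beta> U {\<zero>\<^bsub>S U\<^esub>} = U \<and>
        \<beta> U (carrier (S U)) = {} \<and>
        (\<forall>V. qc_open X V \<and> V \<subseteq> U \<longrightarrow>
           (\<forall>I. fg_ideal (S U) I \<longrightarrow> \<beta> V (Idl\<^bsub>S V\<^esub> (\<rho> U V ` I)) = \<beta> U I \<inter> V) \<and>
           (\<forall>a\<in>carrier (S U). \<beta> U (PIdl\<^bsub>S U\<^esub> a) \<subseteq> U - V \<longrightarrow> \<rho> U V a \<in> Units (S V))))"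

definition A_scheme_morphism ::
  "'a topology \<Rightarrow> ('a set \<Rightarrow> 'r ring) \<Rightarrow> ('a set \<Rightarrow> 'a set \<Rightarrow> 'r \<Rightarrow> 'r) \<Rightarrow> ('a set \<Rightarrow> 'r set \<Rightarrow> 'a set) \<Rightarrow>
   'b topology \<Rightarrow> ('b set \<Rightarrow> 's ring) \<Rightarrow> ('b set \<Rightarrow> 'b set \<Rightarrow> 's \<Rightarrow> 's) \<Rightarrow> ('b set \<Rightarrow> 's set \<Rightarrow> 'b set) \<Rightarrow>
   ('a \<Rightarrow> 'b) \<Rightarrow> ('b set \<Rightarrow> 's \<Rightarrow> 'r) \<Rightarrow> bool" where
  "A_scheme_morphism X OX \<rho>X \<beta>X Y OY \<rho>Y \<beta>Y f \<phi> \<longleftrightarrow>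
     quasi_compact_map X Y f \<and> ringed_space_morphism X OX \<rho>X Y OY \<rho>Y f \<phi> \<and>
     (\<forall>V. qc_open Y V \<longrightarrow> (\<forall>I. fg_ideal (OY V) I \<longrightarrow>
        \<beta>X (f -` V \<inter> topspace X) (Idl\<^bsub>OX (f -` V \<inter> topspace X)\<^esub> (\<phi> V ` I))
          = f -` \<beta>Y V I \<inter> topspace X))"

end

theory Submission
  imports Defs "HOL-Algebra.QuotRing" "HOL-Algebra.Divisibility"
begin

text \<open>In an \<open>\<A>\<close>-scheme the support of a section \<open>s\<close> over a quasi-compact open \<open>U\<close> is exactly
  the set of points of \<open>U\<close> at which the germ of \<open>s\<close> is not a unit: that restrictions reflect
  localizations gives one inclusion, compatibility of \<open>\<beta>\<close> with restriction together with
  \<open>\<beta>(1) = \<emptyset>\<close> the other. Since \<open>\<beta>(a) \<inter> \<beta>(b) \<subseteq> \<beta>(a + b)\<close>, the non-units of every stalk are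
  closed under addition, so every stalk is local. Moreover \<open>\<beta>(g\<^sub>1, \<dots>, g\<^sub>n)\<close> is the set where all
  germs of the \<open>g\<^sub>i\<close> are non-units; hence \<open>\<beta>\<close> is determined by the locally ringed space, and
  a morphism of ringed spaces is compatible with the supports exactly when its stalk maps
  reflect units, i.e.\ are local. So \<open>\<A>\<close>-scheme morphisms are exactly the morphisms of the
  underlying locally ringed spaces, which is full faithfulness.\<close>

section \<open>Ideals and local rings\<close>

lemma ring_hom_Units_closed:
  assumes h: "h \<in> ring_hom R S" and u: "u \<in> Units R"
  shows "h u \<in> Units S"
proof -
  from u obtain v where v: "v \<in> carrier R" "v \<otimes>\<^bsub>R\<^esub> u = \<one>\<^bsub>R\<^esub>" "u \<otimes>\<^bsub>R\<^esub> v = \<one>\<^bsub>R\<^esub>"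
    and uc: "u \<in> carrier R" unfolding Units_def by auto
  have "h v \<otimes>\<^bsub>S\<^esub> h u = h (v \<otimes>\<^bsub>R\<^esub> u)" "h u \<otimes>\<^bsub>S\<^esub> h v = h (u \<otimes>\<^bsub>R\<^esub> v)"
    using ring_hom_mult[OF h v(1) uc] ring_hom_mult[OF h uc v(1)] by simp_all
  then have "h v \<otimes>\<^bsub>S\<^esub> h u = \<one>\<^bsub>S\<^esub>" "h u \<otimes>\<^bsub>S\<^esub> h v = \<one>\<^bsub>S\<^esub>"
    using v ring_hom_one[OF h] by simp_all
  moreover have "h v \<in> carrier S" "h u \<in> carrier S"
    using ring_hom_closed[OF h v(1)] ring_hom_closed[OF h uc] by auto
  ultimately show ?thesis unfolding Units_def by auto
qed

context ring
begin

lemma genideal_empty: "Idl {} = {\<zero>}"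
  using genideal_minimal[OF zeroideal] additive_subgroup.zero_closed[OF ideal.axioms(1)]
    genideal_ideal[of "{}"] by blast

lemma genideal_ideal_eq: "ideal I R \<Longrightarrow> Idl I = I"
  using genideal_minimal[of I I] genideal_self[of I] ideal.Icarr[of I R] by blast

lemma set_add_absorb:
  assumes "ideal I R" "ideal J R" "I \<subseteq> J" shows "I <+>\<^bsub>R\<^esub> J = J"
  using union_genideal[OF assms(1,2)] genideal_ideal_eq[OF assms(2)] assms(3)
  by (simp add: sup.absorb2)

lemma set_add_genideal:
  assumes "G \<subseteq> carrier R" "H \<subseteq> carrier R"
  shows "Idl G <+>\<^bsub>R\<^esub> Idl H = Idl (G \<union> H)"
proof -
  have iG: "ideal (Idl G) R" and iH: "ideal (Idl H) R" using assms genideal_ideal by auto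
  have "Idl (Idl G \<union> Idl H) = Idl (G \<union> H)"
  proof
    have "Idl G \<subseteq> Idl (G \<union> H)" "Idl H \<subseteq> Idl (G \<union> H)"
      using assms subset_Idl_subset[of "G \<union> H"] by auto
    then show "Idl (Idl G \<union> Idl H) \<subseteq> Idl (G \<union> H)"
      using assms by (intro genideal_minimal genideal_ideal) auto
    have "G \<union> H \<subseteq> Idl G \<union> Idl H" using assms genideal_self by auto
    moreover have "Idl G \<union> Idl H \<subseteq> carrier R" using ideal.Icarr[OF iG] ideal.Icarr[OF iH] by auto
    ultimately show "Idl (G \<union> H) \<subseteq> Idl (Idl G \<union> Idl H)" by (intro subset_Idl_subset)
  qed
  then show ?thesis using union_genideal[OF iG iH] by simp
qed

lemma ideal_Units_eq_carrier:
  assumes "ideal I R" "u \<in> I" "u \<in> Units R" shows "I = carrier R"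
proof -
  have "inv u \<otimes> u \<in> I" using ideal.I_l_closed[OF assms(1,2)] Units_inv_closed[OF assms(3)] by blast
  then show ?thesis using Units_l_inv[OF assms(3)] assms(1) ideal.one_imp_carrier by fastforce
qed

lemma proper_ideal_subset_nonunits:
  assumes "ideal I R" "I \<noteq> carrier R" shows "I \<subseteq> carrier R - Units R"
  using assms(2) ideal_Units_eq_carrier[OF assms(1)] ideal.Icarr[OF assms(1)] by blast

lemma fg_ideal_set_add:
  assumes "fg_ideal R I" "fg_ideal R J" shows "fg_ideal R (I <+>\<^bsub>R\<^esub> J)"
proof -
  obtain G where G: "finite G" "G \<subseteq> carrier R" "I = Idl G" "ideal I R"
    using assms(1) unfolding fg_ideal_def by blast
  obtain H where H: "finite H" "H \<subseteq> carrier R" "J = Idl H" "ideal J R"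
    using assms(2) unfolding fg_ideal_def by blast
  have "I <+>\<^bsub>R\<^esub> J = Idl (G \<union> H)" using set_add_genideal[OF G(2) H(2)] G H by simp
  then show ?thesis unfolding fg_ideal_def using G H add_ideals[OF G(4) H(4)]
    by (intro conjI exI[of _ "G \<union> H"]) auto
qed

end

context cring
begin

lemma genideal_insert:
  assumes "a \<in> carrier R" "H \<subseteq> carrier R"
  shows "Idl (insert a H) = PIdl a <+>\<^bsub>R\<^esub> Idl H"
  using set_add_genideal[of "{a}" H] assms cgenideal_eq_genideal by simp

lemma cgenideal_zero: "PIdl \<zero> = {\<zero>}"
  using cgenideal_eq_genideal genideal_zero by simp

lemma cgenideal_Units: "u \<in> Units R \<Longrightarrow> PIdl u = carrier R"
  using ideal_Units_eq_carrier cgenideal_ideal cgenideal_self by blast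

lemma fg_ideal_cgenideal: "a \<in> carrier R \<Longrightarrow> fg_ideal R (PIdl a)"
  unfolding fg_ideal_def using cgenideal_ideal cgenideal_eq_genideal
  by (intro conjI exI[of _ "{a}"]) auto

lemma nonunits_mult_closed:
  assumes "a \<in> carrier R - Units R" "x \<in> carrier R"
  shows "x \<otimes> a \<in> carrier R - Units R"
  using assms unit_factor[of a x] m_comm[of x a] by auto

end

lemma genideal_image_ring_hom:
  assumes R: "ring R" and S: "ring S" and h: "h \<in> ring_hom R S" and G: "G \<subseteq> carrier R"
  shows "Idl\<^bsub>S\<^esub> (h ` (Idl\<^bsub>R\<^esub> G)) = Idl\<^bsub>S\<^esub> (h ` G)"
proof -
  interpret R: ring R by fact
  interpret S: ring S by fact
  interpret ring_hom_ring R S h using ring_hom_ringI2 R.ring_axioms S.ring_axioms h .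
  have hG: "h ` G \<subseteq> carrier S" using ring_hom_closed[OF h] G by auto
  have hIG: "h ` (Idl\<^bsub>R\<^esub> G) \<subseteq> carrier S"
    using ideal.Icarr[OF R.genideal_ideal[OF G]] ring_hom_closed[OF h] by auto
  show ?thesis
  proof
    have "ideal {r \<in> carrier R. h r \<in> Idl\<^bsub>S\<^esub> (h ` G)} R"
      using ideal_vimage S.genideal_ideal[OF hG] by blast
    moreover have "G \<subseteq> {r \<in> carrier R. h r \<in> Idl\<^bsub>S\<^esub> (h ` G)}"
      using G S.genideal_self[OF hG] by auto
    ultimately have "h ` (Idl\<^bsub>R\<^esub> G) \<subseteq> Idl\<^bsub>S\<^esub> (h ` G)"
      using R.genideal_minimal by blast
    then show "Idl\<^bsub>S\<^esub> (h ` (Idl\<^bsub>R\<^esub> G)) \<subseteq> Idl\<^bsub>S\<^esub> (h ` G)"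
      using S.genideal_minimal S.genideal_ideal[OF hG] by blast
    show "Idl\<^bsub>S\<^esub> (h ` G) \<subseteq> Idl\<^bsub>S\<^esub> (h ` (Idl\<^bsub>R\<^esub> G))"
      using S.subset_Idl_subset[OF hIG] R.genideal_self[OF G] by blast
  qed
qed

lemma cgenideal_image_ring_hom:
  assumes R: "cring R" and S: "cring S" and h: "h \<in> ring_hom R S" and a: "a \<in> carrier R"
  shows "Idl\<^bsub>S\<^esub> (h ` (PIdl\<^bsub>R\<^esub> a)) = PIdl\<^bsub>S\<^esub> (h a)"
  using genideal_image_ring_hom[OF cring.axioms(1)[OF R] cring.axioms(1)[OF S] h, of "{a}"] a
    cring.cgenideal_eq_genideal[OF R a] cring.cgenideal_eq_genideal[OF S ring_hom_closed[OF h a]]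
  by simp

lemma (in cring) ideal_nonunits:
  assumes nontrivial: "\<one> \<noteq> \<zero>"
    and add_closed: "\<And>a b. a \<in> carrier R - Units R \<Longrightarrow> b \<in> carrier R - Units R \<Longrightarrow> a \<oplus> b \<notin> Units R"
  shows "ideal (carrier R - Units R) R"
proof (rule idealI)
  show "subgroup (carrier R - Units R) (add_monoid R)"
  proof
    have "\<zero> \<notin> Units R" using nontrivial Units_l_inv Units_inv_closed r_null by metis
    then show "\<one>\<^bsub>add_monoid R\<^esub> \<in> carrier R - Units R" by simp
    show "inv\<^bsub>add_monoid R\<^esub> x \<in> carrier R - Units R" if "x \<in> carrier R - Units R" for x
      using nonunits_mult_closed[OF that, of "\<ominus> \<one>"] that by (simp add: a_inv_def[symmetric] l_minus)
  qed (use add_closed in auto)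
qed (use nonunits_mult_closed m_comm in \<open>auto simp: ring_axioms\<close>)

lemma (in cring) local_ringI_nonunits:
  assumes nontrivial: "\<one> \<noteq> \<zero>"
    and add_closed: "\<And>a b. a \<in> carrier R - Units R \<Longrightarrow> b \<in> carrier R - Units R \<Longrightarrow> a \<oplus> b \<notin> Units R"
  shows "local_ring R \<and> max_ideal R = carrier R - Units R"
proof -
  define N where "N = carrier R - Units R"
  have N: "ideal N R" using ideal_nonunits[OF assms] by (simp add: N_def)
  have maximal: "maximalideal N R"
  proof (rule maximalidealI[OF N])
    show "carrier R \<noteq> N" by (auto simp: N_def)
    show "J = N \<or> J = carrier R" if "ideal J R" "N \<subseteq> J" "J \<subseteq> carrier R" for J
      using proper_ideal_subset_nonunits[OF that(1)] that(2) by (auto simp: N_def)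
  qed
  have unique: "M = N" if "maximalideal M R" for M
  proof -
    interpret maximalideal M R by fact
    have "M \<subseteq> N" using proper_ideal_subset_nonunits[OF is_ideal I_notcarr[symmetric]] by (simp add: N_def)
    then show ?thesis using I_maximal[OF N] by (auto simp: N_def)
  qed
  show ?thesis
    unfolding local_ring_def max_ideal_def N_def[symmetric]
    using maximal unique the_equality[of "\<lambda>M. maximalideal M R" N] is_cring by blast
qed

lemma local_ring_hom_iff_reflects_Units:
  assumes "max_ideal A = carrier A - Units A" "max_ideal B = carrier B - Units B"
    and "h \<in> ring_hom A B"
  shows "local_ring_hom A B h \<longleftrightarrow> (\<forall>a\<in>carrier A. h a \<in> Units B \<longrightarrow> a \<in> Units A)"
  using assms ring_hom_closed unfolding local_ring_hom_def by fastforce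

section \<open>Stalks of a presheaf of rings\<close>

locale cring_presheaf =
  fixes X :: "'a topology" and S :: "'a set \<Rightarrow> 'r ring" and \<rho> :: "'a set \<Rightarrow> 'a set \<Rightarrow> 'r \<Rightarrow> 'r"
  assumes presheaf: "presheaf_of_crings X S \<rho>"
begin

abbreviation "GP x \<equiv> germ_pairs X S x"
abbreviation "gr x \<equiv> germ_rel X S \<rho> x"
abbreviation "gm x \<equiv> germ X S \<rho> x"
abbreviation "St x \<equiv> stalk X S \<rho> x"

lemma cring_sections: "openin X U \<Longrightarrow> cring (S U)"
  using presheaf by (simp add: presheaf_of_crings_def)

lemma restrict_hom: "openin X U \<Longrightarrow> openin X V \<Longrightarrow> V \<subseteq> U \<Longrightarrow> \<rho> U V \<in> ring_hom (S U) (S V)"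
  using presheaf by (simp add: presheaf_of_crings_def)

lemma restrict_id: "openin X U \<Longrightarrow> s \<in> carrier (S U) \<Longrightarrow> \<rho> U U s = s"
  using presheaf by (simp add: presheaf_of_crings_def)

lemma restrict_comp:
  "openin X U \<Longrightarrow> openin X V \<Longrightarrow> openin X W \<Longrightarrow> W \<subseteq> V \<Longrightarrow> V \<subseteq> U \<Longrightarrow>
   s \<in> carrier (S U) \<Longrightarrow> \<rho> V W (\<rho> U V s) = \<rho> U W s"
  using presheaf by (simp add: presheaf_of_crings_def)

lemma restrict_closed:
  "openin X U \<Longrightarrow> openin X V \<Longrightarrow> V \<subseteq> U \<Longrightarrow> s \<in> carrier (S U) \<Longrightarrow> \<rho> U V s \<in> carrier (S V)"
  by (rule ring_hom_closed[OF restrict_hom])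

lemma restrict_zero: "openin X U \<Longrightarrow> openin X V \<Longrightarrow> V \<subseteq> U \<Longrightarrow> \<rho> U V \<zero>\<^bsub>S U\<^esub> = \<zero>\<^bsub>S V\<^esub>"
  using ring_hom_zero[OF restrict_hom cring.axioms(1)[OF cring_sections] cring.axioms(1)[OF cring_sections]]
  by blast

lemma restrict_agree_mono:
  assumes "openin X U" "openin X V" "openin X W" "openin X W'" "W \<subseteq> U" "W \<subseteq> V" "W' \<subseteq> W"
    "s \<in> carrier (S U)" "t \<in> carrier (S V)" "\<rho> U W s = \<rho> V W t"
  shows "\<rho> U W' s = \<rho> V W' t"
  using restrict_comp[of U W W' s] restrict_comp[of V W W' t] assms by auto

lemma germ_pairs_iff: "(U, s) \<in> GP x \<longleftrightarrow> openin X U \<and> x \<in> U \<and> s \<in> carrier (S U)"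
  by (simp add: germ_pairs_def)

lemma germ_rel_iff: "((U, s), (V, t)) \<in> gr x \<longleftrightarrow> (U, s) \<in> GP x \<and> (V, t) \<in> GP x \<and>
   (\<exists>W. openin X W \<and> x \<in> W \<and> W \<subseteq> U \<inter> V \<and> \<rho> U W s = \<rho> V W t)"
  by (simp add: germ_rel_def)

lemma equiv_germ_rel: "equiv (GP x) (gr x)"
proof (rule equivI)
  show "refl_on (GP x) (gr x)"
    by (rule refl_onI) (auto simp: germ_rel_def germ_pairs_iff)
  show "sym (gr x)" by (rule symI) (auto simp: germ_rel_def)
  show "trans (gr x)"
  proof (rule transI)
    fix p q r assume pq: "(p, q) \<in> gr x" and qr: "(q, r) \<in> gr x"
    obtain U s V t Z w where pqr: "p = (U, s)" "q = (V, t)" "r = (Z, w)"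
      by (cases p, cases q, cases r) auto
    from pq obtain W1 where W1: "openin X W1" "x \<in> W1" "W1 \<subseteq> U \<inter> V" "\<rho> U W1 s = \<rho> V W1 t"
      and g1: "(U, s) \<in> GP x" "(V, t) \<in> GP x" by (auto simp: pqr germ_rel_iff)
    from qr obtain W2 where W2: "openin X W2" "x \<in> W2" "W2 \<subseteq> V \<inter> Z" "\<rho> V W2 t = \<rho> Z W2 w"
      and g2: "(Z, w) \<in> GP x" by (auto simp: pqr germ_rel_iff)
    have "openin X (W1 \<inter> W2)" using W1 W2 by auto
    then have "\<rho> U (W1 \<inter> W2) s = \<rho> Z (W1 \<inter> W2) w"
      using restrict_agree_mono[of U V W1 "W1 \<inter> W2" s t] restrict_agree_mono[of V Z W2 "W1 \<inter> W2" t w]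
        g1 g2 W1 W2 by (auto simp: germ_pairs_iff)
    then show "(p, r) \<in> gr x" using W1 W2 g1 g2
      by (auto simp: pqr germ_rel_iff intro!: exI[of _ "W1 \<inter> W2"])
  qed
qed (auto simp: germ_rel_def)

lemma germ_eq_iff:
  "(U, s) \<in> GP x \<Longrightarrow> (V, t) \<in> GP x \<Longrightarrow> gm x U s = gm x V t \<longleftrightarrow> ((U, s), (V, t)) \<in> gr x"
  unfolding germ_def using eq_equiv_class_iff[OF equiv_germ_rel] by blast

lemma germ_eqI:
  assumes "(U, s) \<in> GP x" "(V, t) \<in> GP x" "openin X W" "x \<in> W" "W \<subseteq> U \<inter> V" "\<rho> U W s = \<rho> V W t"
  shows "gm x U s = gm x V t"
  using germ_eq_iff[OF assms(1,2)] germ_rel_iff assms by blast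

lemma germ_restrict:
  assumes "(U, s) \<in> GP x" "openin X W" "x \<in> W" "W \<subseteq> U"
  shows "gm x W (\<rho> U W s) = gm x U s"
  using assms restrict_closed[of U W s] restrict_id[of W "\<rho> U W s"]
  by (intro germ_eqI[of _ _ _ _ _ W]) (auto simp: germ_pairs_iff)

lemma germ_in_stalk: "(U, s) \<in> GP x \<Longrightarrow> gm x U s \<in> carrier (St x)"
  by (simp add: stalk_def germ_def quotientI)

lemma stalk_elem_cases:
  assumes "A \<in> carrier (St x)"
  obtains U s where "openin X U" "x \<in> U" "s \<in> carrier (S U)" "A = gm x U s"
  using assms by (auto simp: stalk_def germ_def germ_pairs_iff elim!: quotientE)

lemma germ_some_rep:
  assumes "(U, s) \<in> GP x"
  obtains U' s' where "(SOME p. p \<in> gm x U s) = (U', s')" "(U', s') \<in> GP x" "gm x U' s' = gm x U s"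
proof -
  have "(U, s) \<in> gm x U s" unfolding germ_def using equiv_class_self[OF equiv_germ_rel assms] .
  then have "(SOME p. p \<in> gm x U s) \<in> gm x U s" by (rule someI)
  moreover obtain U' s' where rep: "(SOME p. p \<in> gm x U s) = (U', s')" by fastforce
  ultimately have "((U, s), (U', s')) \<in> gr x" by (simp add: germ_def)
  then have "(U', s') \<in> GP x" "gm x U' s' = gm x U s"
    using germ_eq_iff assms by (auto simp: germ_rel_iff)
  then show ?thesis using that rep by blast
qed

text \<open>The stalk operations act on representatives chosen by \<open>SOME\<close>; they are well defined
  because restriction commutes with every operation \<open>op\<close> of the section rings.\<close>

context
  fixes op :: "'r ring \<Rightarrow> 'r \<Rightarrow> 'r \<Rightarrow> 'r"
  assumes op_closed: "\<And>U a b. openin X U \<Longrightarrow> a \<in> carrier (S U) \<Longrightarrow> b \<in> carrier (S U) \<Longrightarrow>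
      op (S U) a b \<in> carrier (S U)"
    and restrict_op: "\<And>U V a b. openin X U \<Longrightarrow> openin X V \<Longrightarrow> V \<subseteq> U \<Longrightarrow>
      a \<in> carrier (S U) \<Longrightarrow> b \<in> carrier (S U) \<Longrightarrow> \<rho> U V (op (S U) a b) = op (S V) (\<rho> U V a) (\<rho> U V b)"
begin

definition germ_op :: "'a \<Rightarrow> 'a set \<Rightarrow> 'r \<Rightarrow> 'a set \<Rightarrow> 'r \<Rightarrow> ('a set \<times> 'r) set" where
  "germ_op x U s V t = gm x (U \<inter> V) (op (S (U \<inter> V)) (\<rho> U (U \<inter> V) s) (\<rho> V (U \<inter> V) t))"

lemma restrict_germ_op:
  assumes "openin X U" "openin X V" "openin X W" "W \<subseteq> U \<inter> V" "s \<in> carrier (S U)" "t \<in> carrier (S V)"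
  shows "\<rho> (U \<inter> V) W (op (S (U \<inter> V)) (\<rho> U (U \<inter> V) s) (\<rho> V (U \<inter> V) t)) = op (S W) (\<rho> U W s) (\<rho> V W t)"
proof -
  have UV: "openin X (U \<inter> V)" using assms by auto
  have "\<rho> (U \<inter> V) W (op (S (U \<inter> V)) (\<rho> U (U \<inter> V) s) (\<rho> V (U \<inter> V) t))
      = op (S W) (\<rho> (U \<inter> V) W (\<rho> U (U \<inter> V) s)) (\<rho> (U \<inter> V) W (\<rho> V (U \<inter> V) t))"
    using assms UV by (intro restrict_op) (auto intro: restrict_closed)
  also have "\<dots> = op (S W) (\<rho> U W s) (\<rho> V W t)"
    using assms UV restrict_comp[of U "U \<inter> V" W s] restrict_comp[of V "U \<inter> V" W t] by auto
  finally show ?thesis .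
qed

lemma germ_op_cong:
  assumes U: "(U, s) \<in> GP x" "(U', s') \<in> GP x" "gm x U' s' = gm x U s"
    and V: "(V, t) \<in> GP x" "(V', t') \<in> GP x" "gm x V' t' = gm x V t"
  shows "germ_op x U' s' V' t' = germ_op x U s V t"
proof -
  obtain W1 where W1: "openin X W1" "x \<in> W1" "W1 \<subseteq> U' \<inter> U" "\<rho> U' W1 s' = \<rho> U W1 s"
    using U germ_eq_iff germ_rel_iff by metis
  obtain W2 where W2: "openin X W2" "x \<in> W2" "W2 \<subseteq> V' \<inter> V" "\<rho> V' W2 t' = \<rho> V W2 t"
    using V germ_eq_iff germ_rel_iff by metis
  define W where "W = W1 \<inter> W2"
  have o: "openin X U" "openin X V" "openin X U'" "openin X V'" "s \<in> carrier (S U)"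
    "t \<in> carrier (S V)" "s' \<in> carrier (S U')" "t' \<in> carrier (S V')" "x \<in> U \<inter> V" "x \<in> U' \<inter> V'"
    using U V by (auto simp: germ_pairs_iff)
  have W: "openin X W" "x \<in> W" "W \<subseteq> U' \<inter> V'" "W \<subseteq> U \<inter> V" using W1 W2 by (auto simp: W_def)
  have "\<rho> U' W s' = \<rho> U W s" "\<rho> V' W t' = \<rho> V W t"
    using restrict_agree_mono[of U' U W1 W s' s] restrict_agree_mono[of V' V W2 W t' t] o W1 W2
    by (auto simp: W_def)
  then show ?thesis unfolding germ_op_def using o W
    by (intro germ_eqI) (auto simp: germ_pairs_iff restrict_germ_op intro!: op_closed restrict_closed)
qed

lemma germ_op_some_rep:
  assumes "(U, s) \<in> GP x" "(V, t) \<in> GP x"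
  shows "(case (SOME p. p \<in> gm x U s, SOME q. q \<in> gm x V t) of ((U, s), (V, t)) \<Rightarrow> germ_op x U s V t)
       = germ_op x U s V t"
proof -
  obtain U' s' where "(SOME p. p \<in> gm x U s) = (U', s')" "(U', s') \<in> GP x" "gm x U' s' = gm x U s"
    using germ_some_rep[OF assms(1)] .
  moreover obtain V' t' where "(SOME p. p \<in> gm x V t) = (V', t')" "(V', t') \<in> GP x" "gm x V' t' = gm x V t"
    using germ_some_rep[OF assms(2)] .
  ultimately show ?thesis using germ_op_cong[OF assms(1) _ _ assms(2)] by simp
qed

end

lemma stalk_mult_germ:
  assumes "(U, s) \<in> GP x" "(V, t) \<in> GP x"
  shows "gm x U s \<otimes>\<^bsub>St x\<^esub> gm x V t = gm x (U \<inter> V) (\<rho> U (U \<inter> V) s \<otimes>\<^bsub>S (U \<inter> V)\<^esub> \<rho> V (U \<inter> V) t)"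
  using germ_op_some_rep[of "\<lambda>R a b. a \<otimes>\<^bsub>R\<^esub> b", OF _ _ assms]
  by (simp add: stalk_def germ_op_def cring.cring_simprules cring_sections ring_hom_mult restrict_hom)

lemma stalk_add_germ:
  assumes "(U, s) \<in> GP x" "(V, t) \<in> GP x"
  shows "gm x U s \<oplus>\<^bsub>St x\<^esub> gm x V t = gm x (U \<inter> V) (\<rho> U (U \<inter> V) s \<oplus>\<^bsub>S (U \<inter> V)\<^esub> \<rho> V (U \<inter> V) t)"
  using germ_op_some_rep[of "\<lambda>R a b. a \<oplus>\<^bsub>R\<^esub> b", OF _ _ assms]
  by (simp add: stalk_def germ_op_def cring.cring_simprules cring_sections ring_hom_add restrict_hom)

lemma stalk_mult_germ_same:
  assumes "openin X T" "x \<in> T" "a \<in> carrier (S T)" "b \<in> carrier (S T)"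
  shows "gm x T a \<otimes>\<^bsub>St x\<^esub> gm x T b = gm x T (a \<otimes>\<^bsub>S T\<^esub> b)"
  using stalk_mult_germ[of T a x T b] assms by (simp add: germ_pairs_iff restrict_id)

lemma stalk_add_germ_same:
  assumes "openin X T" "x \<in> T" "a \<in> carrier (S T)" "b \<in> carrier (S T)"
  shows "gm x T a \<oplus>\<^bsub>St x\<^esub> gm x T b = gm x T (a \<oplus>\<^bsub>S T\<^esub> b)"
  using stalk_add_germ[of T a x T b] assms by (simp add: germ_pairs_iff restrict_id)

lemma stalk_one_germ:
  assumes "openin X T" "x \<in> T"
  shows "\<one>\<^bsub>St x\<^esub> = gm x T \<one>\<^bsub>S T\<^esub>"
proof -
  have T: "T \<subseteq> topspace X" using openin_subset[OF assms(1)] .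
  have "(topspace X, \<one>\<^bsub>S (topspace X)\<^esub>) \<in> GP x"
    using assms T cring_sections[of "topspace X"] by (auto simp: germ_pairs_iff cring.cring_simprules)
  from germ_restrict[OF this assms T] show ?thesis
    using ring_hom_one[OF restrict_hom[OF _ assms(1) T]] by (simp add: stalk_def)
qed

lemma stalk_zero_germ:
  assumes "openin X T" "x \<in> T"
  shows "\<zero>\<^bsub>St x\<^esub> = gm x T \<zero>\<^bsub>S T\<^esub>"
proof -
  have T: "T \<subseteq> topspace X" using openin_subset[OF assms(1)] .
  have "(topspace X, \<zero>\<^bsub>S (topspace X)\<^esub>) \<in> GP x"
    using assms T cring_sections[of "topspace X"] by (auto simp: germ_pairs_iff cring.cring_simprules)
  from germ_restrict[OF this assms T] show ?thesis
    using restrict_zero[OF _ assms(1) T] by (simp add: stalk_def)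
qed

lemma stalk_common_rep3:
  assumes "A \<in> carrier (St x)" "B \<in> carrier (St x)" "C \<in> carrier (St x)"
  obtains T a b c where "openin X T" "x \<in> T" "a \<in> carrier (S T)" "b \<in> carrier (S T)"
    "c \<in> carrier (S T)" "A = gm x T a" "B = gm x T b" "C = gm x T c"
proof -
  obtain U a where a: "openin X U" "x \<in> U" "a \<in> carrier (S U)" "A = gm x U a"
    using assms(1) by (rule stalk_elem_cases)
  obtain V b where b: "openin X V" "x \<in> V" "b \<in> carrier (S V)" "B = gm x V b"
    using assms(2) by (rule stalk_elem_cases)
  obtain W c where c: "openin X W" "x \<in> W" "c \<in> carrier (S W)" "C = gm x W c"
    using assms(3) by (rule stalk_elem_cases)
  let ?T = "U \<inter> V \<inter> W"
  have T: "openin X ?T" "x \<in> ?T" and sub: "?T \<subseteq> U" "?T \<subseteq> V" "?T \<subseteq> W" using a b c by auto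
  have "gm x ?T (\<rho> U ?T a) = A" "gm x ?T (\<rho> V ?T b) = B" "gm x ?T (\<rho> W ?T c) = C"
    using a b c germ_restrict[OF _ T sub(1)] germ_restrict[OF _ T sub(2)] germ_restrict[OF _ T sub(3)]
    by (simp_all add: germ_pairs_iff)
  moreover have "\<rho> U ?T a \<in> carrier (S ?T)" "\<rho> V ?T b \<in> carrier (S ?T)" "\<rho> W ?T c \<in> carrier (S ?T)"
    using a b c T sub by (auto intro: restrict_closed)
  ultimately show ?thesis using that T by metis
qed

lemma stalk_common_rep2:
  assumes "A \<in> carrier (St x)" "B \<in> carrier (St x)"
  obtains T a b where "openin X T" "x \<in> T" "a \<in> carrier (S T)" "b \<in> carrier (S T)"
    "A = gm x T a" "B = gm x T b"
  using stalk_common_rep3[OF assms assms(2)] by metis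

lemma stalk_zero_one_closed:
  assumes "x \<in> topspace X"
  shows "\<zero>\<^bsub>St x\<^esub> \<in> carrier (St x)" "\<one>\<^bsub>St x\<^esub> \<in> carrier (St x)"
  using stalk_zero_germ[of "topspace X" x] stalk_one_germ[of "topspace X" x] assms germ_in_stalk
    cring_sections[of "topspace X"] by (auto simp: germ_pairs_iff cring.cring_simprules)

lemmas germ_ops = stalk_add_germ_same stalk_mult_germ_same stalk_zero_germ stalk_one_germ
  germ_in_stalk germ_pairs_iff

lemma stalk_unit_laws:
  assumes "A \<in> carrier (St x)"
  shows "\<zero>\<^bsub>St x\<^esub> \<oplus>\<^bsub>St x\<^esub> A = A" "\<one>\<^bsub>St x\<^esub> \<otimes>\<^bsub>St x\<^esub> A = A"
    "\<exists>B\<in>carrier (St x). B \<oplus>\<^bsub>St x\<^esub> A = \<zero>\<^bsub>St x\<^esub>"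
proof -
  obtain T a where T: "openin X T" "x \<in> T" "a \<in> carrier (S T)" "A = gm x T a"
    using assms by (rule stalk_elem_cases)
  interpret cring "S T" using cring_sections T(1) .
  show "\<zero>\<^bsub>St x\<^esub> \<oplus>\<^bsub>St x\<^esub> A = A" "\<one>\<^bsub>St x\<^esub> \<otimes>\<^bsub>St x\<^esub> A = A"
    using T by (simp_all add: germ_ops)
  have "gm x T (\<ominus>\<^bsub>S T\<^esub> a) \<in> carrier (St x) \<and> gm x T (\<ominus>\<^bsub>S T\<^esub> a) \<oplus>\<^bsub>St x\<^esub> A = \<zero>\<^bsub>St x\<^esub>"
    using T by (simp add: germ_ops l_neg)
  then show "\<exists>B\<in>carrier (St x). B \<oplus>\<^bsub>St x\<^esub> A = \<zero>\<^bsub>St x\<^esub>" by blast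
qed

lemma stalk_closed_comm:
  assumes "A \<in> carrier (St x)" "B \<in> carrier (St x)"
  shows "A \<oplus>\<^bsub>St x\<^esub> B \<in> carrier (St x)" "A \<otimes>\<^bsub>St x\<^esub> B \<in> carrier (St x)"
    "A \<oplus>\<^bsub>St x\<^esub> B = B \<oplus>\<^bsub>St x\<^esub> A" "A \<otimes>\<^bsub>St x\<^esub> B = B \<otimes>\<^bsub>St x\<^esub> A"
proof -
  obtain T a b where T: "openin X T" "x \<in> T" "a \<in> carrier (S T)" "b \<in> carrier (S T)"
    "A = gm x T a" "B = gm x T b"
    using assms by (rule stalk_common_rep2)
  interpret cring "S T" using cring_sections T(1) .
  show "A \<oplus>\<^bsub>St x\<^esub> B \<in> carrier (St x)" "A \<otimes>\<^bsub>St x\<^esub> B \<in> carrier (St x)"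
    "A \<oplus>\<^bsub>St x\<^esub> B = B \<oplus>\<^bsub>St x\<^esub> A" "A \<otimes>\<^bsub>St x\<^esub> B = B \<otimes>\<^bsub>St x\<^esub> A"
    using T by (simp_all add: germ_ops a_comm m_comm)
qed

lemma stalk_assoc_distrib:
  assumes "A \<in> carrier (St x)" "B \<in> carrier (St x)" "C \<in> carrier (St x)"
  shows "A \<oplus>\<^bsub>St x\<^esub> B \<oplus>\<^bsub>St x\<^esub> C = A \<oplus>\<^bsub>St x\<^esub> (B \<oplus>\<^bsub>St x\<^esub> C)"
    "A \<otimes>\<^bsub>St x\<^esub> B \<otimes>\<^bsub>St x\<^esub> C = A \<otimes>\<^bsub>St x\<^esub> (B \<otimes>\<^bsub>St x\<^esub> C)"
    "(A \<oplus>\<^bsub>St x\<^esub> B) \<otimes>\<^bsub>St x\<^esub> C = A \<otimes>\<^bsub>St x\<^esub> C \<oplus>\<^bsub>St x\<^esub> B \<otimes>\<^bsub>St x\<^esub> C"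
proof -
  obtain T a b c where T: "openin X T" "x \<in> T" "a \<in> carrier (S T)" "b \<in> carrier (S T)"
    "c \<in> carrier (S T)" "A = gm x T a" "B = gm x T b" "C = gm x T c"
    using assms by (rule stalk_common_rep3)
  interpret cring "S T" using cring_sections T(1) .
  show "A \<oplus>\<^bsub>St x\<^esub> B \<oplus>\<^bsub>St x\<^esub> C = A \<oplus>\<^bsub>St x\<^esub> (B \<oplus>\<^bsub>St x\<^esub> C)"
    "A \<otimes>\<^bsub>St x\<^esub> B \<otimes>\<^bsub>St x\<^esub> C = A \<otimes>\<^bsub>St x\<^esub> (B \<otimes>\<^bsub>St x\<^esub> C)"
    "(A \<oplus>\<^bsub>St x\<^esub> B) \<otimes>\<^bsub>St x\<^esub> C = A \<otimes>\<^bsub>St x\<^esub> C \<oplus>\<^bsub>St x\<^esub> B \<otimes>\<^bsub>St x\<^esub> C"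
    using T by (simp_all add: germ_ops a_assoc m_assoc l_distr)
qed

lemma cring_stalk: "x \<in> topspace X \<Longrightarrow> cring (St x)"
  by (intro cringI abelian_groupI comm_monoidI)
    (simp_all add: stalk_zero_one_closed stalk_unit_laws stalk_closed_comm(1,2) stalk_assoc_distrib,
     simp_all add: stalk_closed_comm(3,4))

lemma germ_Units_if_restrict_Units:
  assumes g: "(U, s) \<in> GP x" and W: "openin X W" "x \<in> W" "W \<subseteq> U" "\<rho> U W s \<in> Units (S W)"
  shows "gm x U s \<in> Units (St x)"
proof -
  interpret cring "S W" using cring_sections W(1) .
  let ?u = "\<rho> U W s"
  have c: "?u \<in> carrier (S W)" "inv\<^bsub>S W\<^esub> ?u \<in> carrier (S W)" using W(4) by auto
  have "gm x W (inv\<^bsub>S W\<^esub> ?u) \<otimes>\<^bsub>St x\<^esub> gm x W ?u = \<one>\<^bsub>St x\<^esub>"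
    "gm x W ?u \<otimes>\<^bsub>St x\<^esub> gm x W (inv\<^bsub>S W\<^esub> ?u) = \<one>\<^bsub>St x\<^esub>"
    using stalk_mult_germ_same[OF W(1,2)] stalk_one_germ[OF W(1,2)] c W(4) by simp_all
  moreover have "gm x W ?u \<in> carrier (St x)" "gm x W (inv\<^bsub>S W\<^esub> ?u) \<in> carrier (St x)"
    using W c by (auto simp: germ_pairs_iff intro: germ_in_stalk)
  ultimately show ?thesis using germ_restrict[OF g W(1-3)] unfolding Units_def by auto
qed

lemma restrict_Units_if_germ_Units:
  assumes g: "(U, s) \<in> GP x" and u: "gm x U s \<in> Units (St x)"
  obtains W where "openin X W" "x \<in> W" "W \<subseteq> U" "\<rho> U W s \<in> Units (S W)"
proof -
  obtain B where B: "B \<in> carrier (St x)" "gm x U s \<otimes>\<^bsub>St x\<^esub> B = \<one>\<^bsub>St x\<^esub>"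
    using u unfolding Units_def by blast
  obtain V t where V: "openin X V" "x \<in> V" "t \<in> carrier (S V)" "B = gm x V t"
    using B(1) by (rule stalk_elem_cases)
  have U: "openin X U" "x \<in> U" "s \<in> carrier (S U)" using g by (auto simp: germ_pairs_iff)
  let ?T = "U \<inter> V"
  let ?a = "\<rho> U ?T s" and ?b = "\<rho> V ?T t"
  have T: "openin X ?T" "x \<in> ?T" using U V by auto
  have ab: "?a \<in> carrier (S ?T)" "?b \<in> carrier (S ?T)"
    using restrict_closed[OF U(1) T(1) _ U(3)] restrict_closed[OF V(1) T(1) _ V(3)] by auto
  interpret T: cring "S ?T" using cring_sections T(1) .
  have "gm x ?T (?a \<otimes>\<^bsub>S ?T\<^esub> ?b) = gm x ?T \<one>\<^bsub>S ?T\<^esub>"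
    using B stalk_mult_germ[OF g, of V t] V stalk_one_germ[OF T] by (simp add: germ_pairs_iff)
  then obtain W where W: "openin X W" "x \<in> W" "W \<subseteq> ?T" "\<rho> ?T W (?a \<otimes>\<^bsub>S ?T\<^esub> ?b) = \<rho> ?T W \<one>\<^bsub>S ?T\<^esub>"
    using germ_eq_iff[of ?T "?a \<otimes>\<^bsub>S ?T\<^esub> ?b" x ?T "\<one>\<^bsub>S ?T\<^esub>"] T ab
    by (auto simp: germ_pairs_iff germ_rel_iff)
  interpret W: cring "S W" using cring_sections W(1) .
  have c: "\<rho> U W s \<in> carrier (S W)" "\<rho> ?T W ?b \<in> carrier (S W)"
    using restrict_closed[OF U(1) W(1) _ U(3)] restrict_closed[OF T(1) W(1) W(3) ab(2)] W(3) by auto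
  have "\<rho> U W s \<otimes>\<^bsub>S W\<^esub> \<rho> ?T W ?b = \<one>\<^bsub>S W\<^esub>"
    using W(4) ring_hom_mult[OF restrict_hom[OF T(1) W(1) W(3)] ab] ring_hom_one[OF restrict_hom[OF T(1) W(1) W(3)]]
      restrict_comp[of U ?T W s] U T W by auto
  then have "\<rho> U W s \<in> Units (S W)" using c W.m_comm[OF c] unfolding Units_def by auto
  then show ?thesis using that W by blast
qed

end


section \<open>Supports and units\<close>

locale Ascheme = cring_presheaf X S \<rho> for X :: "'a topology" and S :: "'a set \<Rightarrow> 'r ring" and \<rho> +
  fixes \<beta> :: "'a set \<Rightarrow> 'r set \<Rightarrow> 'a set"
  assumes A_scheme: "A_scheme X S \<rho> \<beta>"
begin

lemma coherent: "coherent_space X"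
  using A_scheme by (simp add: A_scheme_def)

lemma sheaf: "sheaf_of_crings X S \<rho>"
  using A_scheme by (simp add: A_scheme_def)

lemma qc_open_basis: "openin X W \<Longrightarrow> x \<in> W \<Longrightarrow> \<exists>T. qc_open X T \<and> x \<in> T \<and> T \<subseteq> W"
  using coherent unfolding coherent_space_def by blast

lemma qc_open_openin: "qc_open X U \<Longrightarrow> openin X U"
  by (simp add: qc_open_def)

lemma stalk_common_qc_rep2:
  assumes "A \<in> carrier (St x)" "B \<in> carrier (St x)"
  obtains T a b where "qc_open X T" "x \<in> T" "a \<in> carrier (S T)" "b \<in> carrier (S T)"
    "A = gm x T a" "B = gm x T b"
proof -
  obtain T0 a b where T0: "openin X T0" "x \<in> T0" "a \<in> carrier (S T0)" "b \<in> carrier (S T0)"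
    "A = gm x T0 a" "B = gm x T0 b"
    using assms by (rule stalk_common_rep2)
  obtain T where T: "qc_open X T" "x \<in> T" "T \<subseteq> T0" using qc_open_basis T0 by blast
  have oT: "openin X T" using T qc_open_openin by blast
  show ?thesis
  proof (rule that[OF T(1,2)])
    show "\<rho> T0 T a \<in> carrier (S T)" "\<rho> T0 T b \<in> carrier (S T)"
      using restrict_closed[OF T0(1) oT T(3)] T0 by auto
    show "A = gm x T (\<rho> T0 T a)" "B = gm x T (\<rho> T0 T b)"
      using germ_restrict[OF _ oT T(2,3)] T0 by (simp_all add: germ_pairs_iff)
  qed
qed

lemma stalk_elem_qc_cases:
  assumes "A \<in> carrier (St x)"
  obtains T a where "qc_open X T" "x \<in> T" "a \<in> carrier (S T)" "A = gm x T a"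
  using stalk_common_qc_rep2[OF assms assms] by metis

lemma support_C_cpt: "qc_open X U \<Longrightarrow> fg_ideal (S U) I \<Longrightarrow> \<beta> U I \<in> C_cpt X U"
  using A_scheme by (simp add: A_scheme_def)

lemma support_set_add:
  "qc_open X U \<Longrightarrow> fg_ideal (S U) I \<Longrightarrow> fg_ideal (S U) J \<Longrightarrow> \<beta> U (I <+>\<^bsub>S U\<^esub> J) = \<beta> U I \<inter> \<beta> U J"
  using A_scheme by (simp add: A_scheme_def)

lemma support_zero: "qc_open X U \<Longrightarrow> \<beta> U {\<zero>\<^bsub>S U\<^esub>} = U"
  using A_scheme by (simp add: A_scheme_def)

lemma support_carrier: "qc_open X U \<Longrightarrow> \<beta> U (carrier (S U)) = {}"
  using A_scheme by (simp add: A_scheme_def)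

lemma support_restrict:
  "qc_open X U \<Longrightarrow> qc_open X V \<Longrightarrow> V \<subseteq> U \<Longrightarrow> fg_ideal (S U) I \<Longrightarrow>
   \<beta> V (Idl\<^bsub>S V\<^esub> (\<rho> U V ` I)) = \<beta> U I \<inter> V"
  using A_scheme by (simp add: A_scheme_def)

lemma restrict_Units_if_support_disjoint:
  "qc_open X U \<Longrightarrow> qc_open X V \<Longrightarrow> V \<subseteq> U \<Longrightarrow> a \<in> carrier (S U) \<Longrightarrow>
   \<beta> U (PIdl\<^bsub>S U\<^esub> a) \<subseteq> U - V \<Longrightarrow> \<rho> U V a \<in> Units (S V)"
  using A_scheme by (simp add: A_scheme_def)

lemma support_subset: "qc_open X U \<Longrightarrow> fg_ideal (S U) I \<Longrightarrow> \<beta> U I \<subseteq> U"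
  using support_C_cpt[of U I] closedin_subset unfolding C_cpt_def by fastforce

lemma support_antimono:
  assumes "qc_open X U" "fg_ideal (S U) I" "fg_ideal (S U) J" "I \<subseteq> J"
  shows "\<beta> U J \<subseteq> \<beta> U I"
proof -
  interpret cring "S U" using cring_sections qc_open_openin assms(1) by blast
  have "I <+>\<^bsub>S U\<^esub> J = J" using set_add_absorb assms unfolding fg_ideal_def by blast
  then show ?thesis using support_set_add[OF assms(1-3)] by auto
qed

lemma germ_Units_if_notin_support:
  assumes U: "qc_open X U" and x: "x \<in> U" and s: "s \<in> carrier (S U)"
    and notin: "x \<notin> \<beta> U (PIdl\<^bsub>S U\<^esub> s)"
  shows "gm x U s \<in> Units (St x)"
proof -
  have oU: "openin X U" using U qc_open_openin by blast
  have fg: "fg_ideal (S U) (PIdl\<^bsub>S U\<^esub> s)" using cring.fg_ideal_cgenideal[OF cring_sections[OF oU] s] .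
  obtain C where C: "closedin X C" "\<beta> U (PIdl\<^bsub>S U\<^esub> s) = C \<inter> U"
    using support_C_cpt[OF U fg] unfolding C_cpt_def closedin_subtopology by blast
  then obtain W where W: "qc_open X W" "x \<in> W" "W \<subseteq> U - C"
    using qc_open_basis[OF openin_diff[OF oU C(1)]] x notin by blast
  then have "\<rho> U W s \<in> Units (S W)"
    using restrict_Units_if_support_disjoint[OF U W(1) _ s] C(2) by blast
  then show ?thesis
    using germ_Units_if_restrict_Units[of U s x W] oU x s W qc_open_openin by (auto simp: germ_pairs_iff)
qed

lemma notin_support_if_germ_Units:
  assumes U: "qc_open X U" and x: "x \<in> U" and s: "s \<in> carrier (S U)"
    and unit: "gm x U s \<in> Units (St x)"
  shows "x \<notin> \<beta> U (PIdl\<^bsub>S U\<^esub> s)"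
proof -
  have oU: "openin X U" using U qc_open_openin by blast
  interpret R: cring "S U" using cring_sections oU .
  obtain W0 where W0: "openin X W0" "x \<in> W0" "W0 \<subseteq> U" "\<rho> U W0 s \<in> Units (S W0)"
    using restrict_Units_if_germ_Units[OF _ unit] oU x s by (auto simp: germ_pairs_iff)
  obtain W where W: "qc_open X W" "x \<in> W" "W \<subseteq> W0" using qc_open_basis W0 by blast
  have oW: "openin X W" using W qc_open_openin by blast
  interpret RW: cring "S W" using cring_sections oW .
  have "\<rho> U W s \<in> Units (S W)"
    using ring_hom_Units_closed[OF restrict_hom[OF W0(1) oW W(3)] W0(4)]
      restrict_comp[OF oU W0(1) oW W(3) W0(3) s] by simp
  then have "Idl\<^bsub>S W\<^esub> (\<rho> U W ` (PIdl\<^bsub>S U\<^esub> s)) = carrier (S W)"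
    using cgenideal_image_ring_hom[OF R.is_cring RW.is_cring restrict_hom[OF oU oW] s]
      RW.cgenideal_Units W W0 by auto
  then have "\<beta> U (PIdl\<^bsub>S U\<^esub> s) \<inter> W = {}"
    using support_restrict[OF U W(1) _ R.fg_ideal_cgenideal[OF s]] support_carrier[OF W(1)] W W0 by auto
  then show ?thesis using W by blast
qed

lemma germ_Units_iff_notin_support:
  assumes "qc_open X U" "x \<in> U" "s \<in> carrier (S U)"
  shows "gm x U s \<in> Units (St x) \<longleftrightarrow> x \<notin> \<beta> U (PIdl\<^bsub>S U\<^esub> s)"
  using germ_Units_if_notin_support[OF assms] notin_support_if_germ_Units[OF assms] by blast

lemma mem_support_cgenideal_iff:
  assumes U: "qc_open X U" and s: "s \<in> carrier (S U)"
  shows "x \<in> \<beta> U (PIdl\<^bsub>S U\<^esub> s) \<longleftrightarrow> x \<in> U \<and> gm x U s \<notin> Units (St x)"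
  using germ_Units_iff_notin_support[OF U _ s]
    support_subset[OF U cring.fg_ideal_cgenideal[OF cring_sections[OF qc_open_openin[OF U]] s]]
  by blast

lemma stalk_one_neq_zero:
  assumes x: "x \<in> topspace X"
  shows "\<one>\<^bsub>St x\<^esub> \<noteq> \<zero>\<^bsub>St x\<^esub>"
proof
  interpret St: cring "St x" using cring_stalk[OF x] .
  assume "\<one>\<^bsub>St x\<^esub> = \<zero>\<^bsub>St x\<^esub>"
  then have zero_unit: "\<zero>\<^bsub>St x\<^esub> \<in> Units (St x)" by (metis St.Units_one_closed)
  obtain T where T: "qc_open X T" "x \<in> T" using qc_open_basis[of "topspace X" x] x by auto
  interpret R: cring "S T" using cring_sections qc_open_openin T(1) by blast
  have "gm x T \<zero>\<^bsub>S T\<^esub> \<in> Units (St x)"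
    using zero_unit stalk_zero_germ[OF qc_open_openin[OF T(1)] T(2)] by simp
  then show False
    using germ_Units_iff_notin_support[OF T R.zero_closed] R.cgenideal_zero support_zero[OF T(1)] T(2) by simp
qed

lemma support_cgenideal_add:
  assumes U: "qc_open X U" and ab: "a \<in> carrier (S U)" "b \<in> carrier (S U)"
  shows "\<beta> U (PIdl\<^bsub>S U\<^esub> a) \<inter> \<beta> U (PIdl\<^bsub>S U\<^esub> b) \<subseteq> \<beta> U (PIdl\<^bsub>S U\<^esub> (a \<oplus>\<^bsub>S U\<^esub> b))"
proof -
  interpret R: cring "S U" using cring_sections qc_open_openin U by blast
  have fg: "fg_ideal (S U) (PIdl\<^bsub>S U\<^esub> a)" "fg_ideal (S U) (PIdl\<^bsub>S U\<^esub> b)"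
    "fg_ideal (S U) (PIdl\<^bsub>S U\<^esub> (a \<oplus>\<^bsub>S U\<^esub> b))"
    using R.fg_ideal_cgenideal ab by auto
  have fg_sum: "fg_ideal (S U) (PIdl\<^bsub>S U\<^esub> a <+>\<^bsub>S U\<^esub> PIdl\<^bsub>S U\<^esub> b)"
    using R.fg_ideal_set_add fg by blast
  have "a \<oplus>\<^bsub>S U\<^esub> b \<in> PIdl\<^bsub>S U\<^esub> a <+>\<^bsub>S U\<^esub> PIdl\<^bsub>S U\<^esub> b"
    unfolding set_add_def' using R.cgenideal_self ab by blast
  then have "PIdl\<^bsub>S U\<^esub> (a \<oplus>\<^bsub>S U\<^esub> b) \<subseteq> PIdl\<^bsub>S U\<^esub> a <+>\<^bsub>S U\<^esub> PIdl\<^bsub>S U\<^esub> b"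
    using R.cgenideal_minimal fg_sum unfolding fg_ideal_def by blast
  then show ?thesis
    using support_antimono[OF U fg(3) fg_sum] support_set_add[OF U fg(1,2)] by simp
qed

lemma stalk_nonunits_add_closed:
  assumes A: "A \<in> carrier (St x) - Units (St x)" and B: "B \<in> carrier (St x) - Units (St x)"
  shows "A \<oplus>\<^bsub>St x\<^esub> B \<notin> Units (St x)"
proof -
  obtain T a b where T: "qc_open X T" "x \<in> T" "a \<in> carrier (S T)" "b \<in> carrier (S T)"
    "A = gm x T a" "B = gm x T b"
    using A B by (auto elim: stalk_common_qc_rep2)
  interpret R: cring "S T" using cring_sections qc_open_openin T(1) by blast
  have "x \<in> \<beta> T (PIdl\<^bsub>S T\<^esub> a)" "x \<in> \<beta> T (PIdl\<^bsub>S T\<^esub> b)"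
    using germ_Units_iff_notin_support[OF T(1,2)] T A B by auto
  then have "x \<in> \<beta> T (PIdl\<^bsub>S T\<^esub> (a \<oplus>\<^bsub>S T\<^esub> b))" using support_cgenideal_add[OF T(1,3,4)] by blast
  then show ?thesis
    using germ_Units_iff_notin_support[OF T(1,2)] stalk_add_germ_same[OF qc_open_openin[OF T(1)] T(2-4)] T
    by auto
qed

lemma local_stalk:
  assumes "x \<in> topspace X"
  shows "local_ring (St x) \<and> max_ideal (St x) = carrier (St x) - Units (St x)"
  by (rule cring.local_ringI_nonunits[OF cring_stalk[OF assms] stalk_one_neq_zero[OF assms]
      stalk_nonunits_add_closed])

lemma LRCoh_object: "LRCoh_object X S \<rho>"
  using coherent sheaf local_stalk unfolding LRCoh_object_def locally_ringed_space_def by blast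

lemma support_genideal:
  assumes U: "qc_open X U" and G: "finite G" "G \<subseteq> carrier (S U)"
  shows "\<beta> U (Idl\<^bsub>S U\<^esub> G) = U \<inter> (\<Inter>g\<in>G. \<beta> U (PIdl\<^bsub>S U\<^esub> g))"
  using G
proof (induction G rule: finite_induct)
  interpret R: cring "S U" using cring_sections qc_open_openin U by blast
  case empty
  then show ?case using R.genideal_empty support_zero[OF U] by simp
next
  interpret R: cring "S U" using cring_sections qc_open_openin U by blast
  case (insert a G)
  have "fg_ideal (S U) (Idl\<^bsub>S U\<^esub> G)"
    unfolding fg_ideal_def using insert R.genideal_ideal by auto
  then have "\<beta> U (Idl\<^bsub>S U\<^esub> (insert a G)) = \<beta> U (PIdl\<^bsub>S U\<^esub> a) \<inter> \<beta> U (Idl\<^bsub>S U\<^esub> G)"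
    using R.genideal_insert[of a G] insert support_set_add[OF U R.fg_ideal_cgenideal] by auto
  then show ?case using insert support_subset[OF U R.fg_ideal_cgenideal[of a]] by auto
qed

end

lemma Ascheme_if_A_scheme: "A_scheme X S \<rho> \<beta> \<Longrightarrow> Ascheme X S \<rho> \<beta>"
  by unfold_locales (auto simp: A_scheme_def sheaf_of_crings_def)


section \<open>Morphisms\<close>

locale ringed_morphism = X: cring_presheaf X OX \<rho>X + Y: cring_presheaf Y OY \<rho>Y
  for X :: "'a topology" and OX :: "'a set \<Rightarrow> 'r ring" and \<rho>X
    and Y :: "'b topology" and OY :: "'b set \<Rightarrow> 's ring" and \<rho>Y +
  fixes f :: "'a \<Rightarrow> 'b" and \<phi> :: "'b set \<Rightarrow> 's \<Rightarrow> 'r"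
  assumes morphism: "ringed_space_morphism X OX \<rho>X Y OY \<rho>Y f \<phi>"
begin

abbreviation "pre V \<equiv> f -` V \<inter> topspace X"
abbreviation "stalk_hom x \<equiv> stalk_map X OX \<rho>X f \<phi> x"

lemma continuous: "continuous_map X Y f"
  using morphism by (simp add: ringed_space_morphism_def)

lemma openin_pre: "openin Y V \<Longrightarrow> openin X (pre V)"
  using openin_continuous_map_preimage[OF continuous] by (simp add: Int_commute vimage_def Collect_conj_eq)

lemma sections_hom: "openin Y V \<Longrightarrow> \<phi> V \<in> ring_hom (OY V) (OX (pre V))"
  using morphism by (simp add: ringed_space_morphism_def)

lemma sections_restrict:
  "openin Y V \<Longrightarrow> openin Y W \<Longrightarrow> W \<subseteq> V \<Longrightarrow> t \<in> carrier (OY V) \<Longrightarrow>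
   \<phi> W (\<rho>Y V W t) = \<rho>X (pre V) (pre W) (\<phi> V t)"
  using morphism by (simp add: ringed_space_morphism_def)

lemma germ_pairs_pre: "x \<in> topspace X \<Longrightarrow> (V, t) \<in> Y.GP (f x) \<Longrightarrow> (pre V, \<phi> V t) \<in> X.GP x"
  using openin_pre ring_hom_closed[OF sections_hom] by (auto simp: X.germ_pairs_iff Y.germ_pairs_iff)

lemma stalk_map_germ:
  assumes x: "x \<in> topspace X" and g: "(V, t) \<in> Y.GP (f x)"
  shows "stalk_hom x (Y.gm (f x) V t) = X.gm x (pre V) (\<phi> V t)"
proof -
  obtain V' t' where rep: "(SOME p. p \<in> Y.gm (f x) V t) = (V', t')" "(V', t') \<in> Y.GP (f x)"
    "Y.gm (f x) V' t' = Y.gm (f x) V t" by (rule Y.germ_some_rep[OF g])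
  have "((V', t'), (V, t)) \<in> Y.gr (f x)" using Y.germ_eq_iff[OF rep(2) g] rep(3) by simp
  then obtain W where W: "openin Y W" "f x \<in> W" "W \<subseteq> V' \<inter> V" "\<rho>Y V' W t' = \<rho>Y V W t"
    unfolding Y.germ_rel_iff by blast
  have "X.gm x (pre V') (\<phi> V' t') = X.gm x (pre V) (\<phi> V t)"
  proof (rule X.germ_eqI[OF germ_pairs_pre[OF x rep(2)] germ_pairs_pre[OF x g]])
    show "openin X (pre W)" "x \<in> pre W" "pre W \<subseteq> pre V' \<inter> pre V"
      using openin_pre[OF W(1)] x W by auto
    show "\<rho>X (pre V') (pre W) (\<phi> V' t') = \<rho>X (pre V) (pre W) (\<phi> V t)"
      using sections_restrict[of V' W t'] sections_restrict[of V W t] g rep(2) W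
      by (auto simp: Y.germ_pairs_iff)
  qed
  then show ?thesis using rep by (simp add: stalk_map_def)
qed

lemma stalk_map_ring_hom:
  assumes x: "x \<in> topspace X"
  shows "stalk_hom x \<in> ring_hom (Y.St (f x)) (X.St x)"
proof (rule ring_hom_memI)
  fix A assume "A \<in> carrier (Y.St (f x))"
  then obtain V t where "openin Y V" "f x \<in> V" "t \<in> carrier (OY V)" "A = Y.gm (f x) V t"
    by (rule Y.stalk_elem_cases)
  then show "stalk_hom x A \<in> carrier (X.St x)"
    using stalk_map_germ[OF x] X.germ_in_stalk[OF germ_pairs_pre[OF x]] by (simp add: Y.germ_pairs_iff)
next
  fix A B assume "A \<in> carrier (Y.St (f x))" "B \<in> carrier (Y.St (f x))"
  then obtain T a b where T: "openin Y T" "f x \<in> T" "a \<in> carrier (OY T)" "b \<in> carrier (OY T)"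
    "A = Y.gm (f x) T a" "B = Y.gm (f x) T b" by (rule Y.stalk_common_rep2)
  interpret cring "OY T" using Y.cring_sections T(1) .
  have U: "openin X (pre T)" "x \<in> pre T" using openin_pre[OF T(1)] x T by auto
  have h: "\<phi> T \<in> ring_hom (OY T) (OX (pre T))" using sections_hom T(1) .
  have "\<phi> T a \<in> carrier (OX (pre T))" "\<phi> T b \<in> carrier (OX (pre T))"
    using ring_hom_closed[OF h] T by auto
  then show "stalk_hom x (A \<otimes>\<^bsub>Y.St (f x)\<^esub> B) = stalk_hom x A \<otimes>\<^bsub>X.St x\<^esub> stalk_hom x B"
    "stalk_hom x (A \<oplus>\<^bsub>Y.St (f x)\<^esub> B) = stalk_hom x A \<oplus>\<^bsub>X.St x\<^esub> stalk_hom x B"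
    using T Y.stalk_mult_germ_same[OF T(1-4)] Y.stalk_add_germ_same[OF T(1-4)]
      X.stalk_mult_germ_same[OF U] X.stalk_add_germ_same[OF U] stalk_map_germ[OF x]
      ring_hom_mult[OF h T(3,4)] ring_hom_add[OF h T(3,4)]
    by (simp_all add: Y.germ_pairs_iff)
next
  have oY: "openin Y (topspace Y)" and fx: "f x \<in> topspace Y"
    using continuous_map_image_subset_topspace[OF continuous] x by auto
  have pre: "pre (topspace Y) = topspace X" using continuous_map_image_subset_topspace[OF continuous] by auto
  have "(topspace Y, \<one>\<^bsub>OY (topspace Y)\<^esub>) \<in> Y.GP (f x)"
    using fx Y.cring_sections[OF oY] by (simp add: Y.germ_pairs_iff cring.cring_simprules)
  then show "stalk_hom x \<one>\<^bsub>Y.St (f x)\<^esub> = \<one>\<^bsub>X.St x\<^esub>"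
    using Y.stalk_one_germ[OF oY fx] stalk_map_germ[OF x] X.stalk_one_germ[of "topspace X" x] x
      ring_hom_one[OF sections_hom[OF oY]] pre by simp
qed

definition reflects_Units :: bool where
  "reflects_Units \<longleftrightarrow> (\<forall>x\<in>topspace X. \<forall>A\<in>carrier (Y.St (f x)).
     stalk_hom x A \<in> Units (X.St x) \<longrightarrow> A \<in> Units (Y.St (f x)))"

end


locale Ascheme_ringed_morphism = ringed_morphism X OX \<rho>X Y OY \<rho>Y f \<phi> +
  X: Ascheme X OX \<rho>X \<beta>X + Y: Ascheme Y OY \<rho>Y \<beta>Y
  for X :: "'a topology" and OX :: "'a set \<Rightarrow> 'r ring" and \<rho>X \<beta>X
    and Y :: "'b topology" and OY :: "'b set \<Rightarrow> 's ring" and \<rho>Y \<beta>Y and f \<phi>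
begin

definition preserves_supports :: bool where
  "preserves_supports \<longleftrightarrow> (\<forall>V. qc_open Y V \<longrightarrow> (\<forall>I. fg_ideal (OY V) I \<longrightarrow>
     \<beta>X (pre V) (Idl\<^bsub>OX (pre V)\<^esub> (\<phi> V ` I)) = f -` \<beta>Y V I \<inter> topspace X))"

lemma local_stalk_maps_iff_reflects_Units:
  "(\<forall>x\<in>topspace X. local_ring_hom (Y.St (f x)) (X.St x) (stalk_hom x)) \<longleftrightarrow> reflects_Units"
  unfolding reflects_Units_def
  using local_ring_hom_iff_reflects_Units[OF conjunct2[OF Y.local_stalk] conjunct2[OF X.local_stalk]
      stalk_map_ring_hom] continuous_map_image_subset_topspace[OF continuous]
  by blast

context
  assumes quasi_compact: "quasi_compact_map X Y f"
begin

lemma qc_open_pre: "qc_open Y V \<Longrightarrow> qc_open X (pre V)"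
  using quasi_compact openin_pre unfolding quasi_compact_map_def qc_open_def by blast

lemma reflects_Units_if_preserves_supports:
  assumes preserves_supports
  shows reflects_Units
  unfolding reflects_Units_def
proof (intro ballI impI)
  fix x A assume x: "x \<in> topspace X" and A: "A \<in> carrier (Y.St (f x))"
    and unit: "stalk_hom x A \<in> Units (X.St x)"
  obtain V t where V: "qc_open Y V" "f x \<in> V" "t \<in> carrier (OY V)" "A = Y.gm (f x) V t"
    using A by (rule Y.stalk_elem_qc_cases)
  have oV: "openin Y V" using V Y.qc_open_openin by blast
  have U: "qc_open X (pre V)" using qc_open_pre V(1) .
  interpret RY: cring "OY V" using Y.cring_sections oV .
  interpret RX: cring "OX (pre V)" using X.cring_sections X.qc_open_openin[OF U] .
  have h: "\<phi> V \<in> ring_hom (OY V) (OX (pre V))" using sections_hom oV .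
  have "X.gm x (pre V) (\<phi> V t) \<in> Units (X.St x)"
    using unit stalk_map_germ[OF x] V oV by (simp add: Y.germ_pairs_iff)
  then have "x \<notin> \<beta>X (pre V) (PIdl\<^bsub>OX (pre V)\<^esub> (\<phi> V t))"
    using X.mem_support_cgenideal_iff[OF U ring_hom_closed[OF h V(3)]] by blast
  moreover have "\<beta>X (pre V) (PIdl\<^bsub>OX (pre V)\<^esub> (\<phi> V t)) = pre (\<beta>Y V (PIdl\<^bsub>OY V\<^esub> t))"
    using assms[unfolded preserves_supports_def, rule_format, OF V(1) RY.fg_ideal_cgenideal[OF V(3)]]
      cgenideal_image_ring_hom[OF RY.is_cring RX.is_cring h V(3)] by simp
  ultimately have "f x \<notin> \<beta>Y V (PIdl\<^bsub>OY V\<^esub> t)" using x by blast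
  then show "A \<in> Units (Y.St (f x))"
    using Y.germ_Units_iff_notin_support[OF V(1-3)] V(4) by blast
qed

lemma mem_support_pre_iff_if_reflects_Units:
  assumes reflects_Units and V: "qc_open Y V" and x: "x \<in> pre V" and g: "g \<in> carrier (OY V)"
  shows "x \<in> \<beta>X (pre V) (PIdl\<^bsub>OX (pre V)\<^esub> (\<phi> V g)) \<longleftrightarrow> f x \<in> \<beta>Y V (PIdl\<^bsub>OY V\<^esub> g)"
proof -
  have xt: "x \<in> topspace X" using x by blast
  have gp: "(V, g) \<in> Y.GP (f x)" using Y.qc_open_openin[OF V] x g by (auto simp: Y.germ_pairs_iff)
  have reflect: "stalk_hom x (Y.gm (f x) V g) \<in> Units (X.St x) \<longleftrightarrow> Y.gm (f x) V g \<in> Units (Y.St (f x))"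
    using assms(1) xt Y.germ_in_stalk[OF gp] ring_hom_Units_closed[OF stalk_map_ring_hom[OF xt]]
    unfolding reflects_Units_def by blast
  have "x \<in> \<beta>X (pre V) (PIdl\<^bsub>OX (pre V)\<^esub> (\<phi> V g)) \<longleftrightarrow> X.gm x (pre V) (\<phi> V g) \<notin> Units (X.St x)"
    using X.mem_support_cgenideal_iff[OF qc_open_pre[OF V]] ring_hom_closed[OF sections_hom] g x
      Y.qc_open_openin[OF V] by blast
  also have "\<dots> \<longleftrightarrow> Y.gm (f x) V g \<notin> Units (Y.St (f x))"
    using reflect stalk_map_germ[OF xt gp] by simp
  also have "\<dots> \<longleftrightarrow> f x \<in> \<beta>Y V (PIdl\<^bsub>OY V\<^esub> g)"
    using Y.mem_support_cgenideal_iff[OF V g] x by blast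
  finally show ?thesis .
qed

lemma preserves_supports_if_reflects_Units:
  assumes reflects_Units
  shows preserves_supports
  unfolding preserves_supports_def
proof (intro allI impI)
  fix V I assume V: "qc_open Y V" and I: "fg_ideal (OY V) I"
  have U: "qc_open X (pre V)" using qc_open_pre V .
  have oV: "openin Y V" using V Y.qc_open_openin by blast
  interpret RY: cring "OY V" using Y.cring_sections oV .
  interpret RX: cring "OX (pre V)" using X.cring_sections X.qc_open_openin[OF U] .
  obtain G where G: "finite G" "G \<subseteq> carrier (OY V)" "I = Idl\<^bsub>OY V\<^esub> G"
    using I unfolding fg_ideal_def by blast
  have h: "\<phi> V \<in> ring_hom (OY V) (OX (pre V))" using sections_hom oV .
  have hG: "\<phi> V ` G \<subseteq> carrier (OX (pre V))" using ring_hom_closed[OF h] G by auto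
  have "Idl\<^bsub>OX (pre V)\<^esub> (\<phi> V ` I) = Idl\<^bsub>OX (pre V)\<^esub> (\<phi> V ` G)"
    using genideal_image_ring_hom[OF RY.ring_axioms RX.ring_axioms h G(2)] G(3) by simp
  then have "\<beta>X (pre V) (Idl\<^bsub>OX (pre V)\<^esub> (\<phi> V ` I))
      = pre V \<inter> (\<Inter>g\<in>G. \<beta>X (pre V) (PIdl\<^bsub>OX (pre V)\<^esub> (\<phi> V g)))"
    using X.support_genideal[OF U _ hG] G(1) by simp
  moreover have "\<beta>Y V I = V \<inter> (\<Inter>g\<in>G. \<beta>Y V (PIdl\<^bsub>OY V\<^esub> g))"
    using Y.support_genideal[OF V G(1,2)] G(3) by simp
  moreover have "x \<in> \<beta>X (pre V) (PIdl\<^bsub>OX (pre V)\<^esub> (\<phi> V g)) \<longleftrightarrow> f x \<in> \<beta>Y V (PIdl\<^bsub>OY V\<^esub> g)"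
    if "x \<in> pre V" "g \<in> G" for x g
    using mem_support_pre_iff_if_reflects_Units[OF assms V that(1)] that(2) G(2) by blast
  ultimately show "\<beta>X (pre V) (Idl\<^bsub>OX (pre V)\<^esub> (\<phi> V ` I)) = f -` \<beta>Y V I \<inter> topspace X"
    by auto
qed

end

lemma A_scheme_morphism_iff_LRCoh_morphism:
  "A_scheme_morphism X OX \<rho>X \<beta>X Y OY \<rho>Y \<beta>Y f \<phi> \<longleftrightarrow> LRCoh_morphism X OX \<rho>X Y OY \<rho>Y f \<phi>"
  using morphism local_stalk_maps_iff_reflects_Units reflects_Units_if_preserves_supports
    preserves_supports_if_reflects_Units
  unfolding A_scheme_morphism_def LRCoh_morphism_def preserves_supports_def by blast

end

lemma A_scheme_morphism_iff_LRCoh_morphism: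
  assumes "A_scheme X OX \<rho>X \<beta>X" "A_scheme Y OY \<rho>Y \<beta>Y"
  shows "A_scheme_morphism X OX \<rho>X \<beta>X Y OY \<rho>Y \<beta>Y f \<phi> \<longleftrightarrow> LRCoh_morphism X OX \<rho>X Y OY \<rho>Y f \<phi>"
proof (cases "ringed_space_morphism X OX \<rho>X Y OY \<rho>Y f \<phi>")
  case True
  interpret Ascheme_ringed_morphism X OX \<rho>X \<beta>X Y OY \<rho>Y \<beta>Y f \<phi>
    using Ascheme_if_A_scheme[OF assms(1)] Ascheme_if_A_scheme[OF assms(2)] True
    by (simp add: Ascheme_ringed_morphism_def ringed_morphism_def ringed_morphism_axioms_def Ascheme_def)
  show ?thesis by (rule A_scheme_morphism_iff_LRCoh_morphism)
next
  case False
  then show ?thesis by (simp add: A_scheme_morphism_def LRCoh_morphism_def)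
qed

theorem proposition2p1:
  fixes X :: "'a topology" and OX :: "'a set \<Rightarrow> 'r ring" and \<rho>X :: "'a set \<Rightarrow> 'a set \<Rightarrow> 'r \<Rightarrow> 'r"
    and \<beta>X :: "'a set \<Rightarrow> 'r set \<Rightarrow> 'a set"
    and Y :: "'b topology" and OY :: "'b set \<Rightarrow> 's ring" and \<rho>Y :: "'b set \<Rightarrow> 'b set \<Rightarrow> 's \<Rightarrow> 's"
    and \<beta>Y :: "'b set \<Rightarrow> 's set \<Rightarrow> 'b set"
  assumes "A_scheme X OX \<rho>X \<beta>X" and "A_scheme Y OY \<rho>Y \<beta>Y"
  shows "LRCoh_object X OX \<rho>X \<and> LRCoh_object Y OY \<rho>Y \<and>
         (\<forall>f \<phi>. A_scheme_morphism X OX \<rho>X \<beta>X Y OY \<rho>Y \<beta>Y f \<phi> \<longleftrightarrow>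
                 LRCoh_morphism X OX \<rho>X Y OY \<rho>Y f \<phi>)"
  using Ascheme.LRCoh_object[OF Ascheme_if_A_scheme[OF assms(1)]]
    Ascheme.LRCoh_object[OF Ascheme_if_A_scheme[OF assms(2)]] A_scheme_morphism_iff_LRCoh_morphism[OF assms]
  by blast

end
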